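(* Let $G$ be a connected graph with adjacency matrix $A$, $d=A\mathbf 1$, $D=\mathrm{diag}(d)$, let $e=(i,j)$, $i\ne j$, $a_{ij}>0$, be an edge that is not a cut-edge, and $v=e_i-e_j$. For $t\in[0,1]$ let $A(t)=A+ta_{ij}vv^T$ (so $A(t)\mathbf 1=d$), $P(t)=D^{-1}A(t)$ (irreducible stochastic) and $f(t)=K(P(t))$. Let $1=\lambda_1,\lambda_2,\dots,\lambda_n$ be the eigenvalues of $P(0)=D^{-1}A$. Then the (right) derivative $f'(0)$ exists and \[ 0\le f'(0)\le a_{ij}\big(d_i^{-1}+d_j^{-1}\big)\sum_{\ell=2}^n\frac{1}{(1-\lambda_\ell)^2}. \]
   Context: Graphs are undirected and possibly weighted on vertex set $\{1,\dots,n\}$, with symmetric nonnegative adjacency matrix $A=(a_{k\ell})$; $d=A\mathbf 1$ (all entries assumed positive); $e_k$ is the $k$-th column of the identity and $\mathbf 1$ the all-ones vector. For an irreducible row-stochastic matrix $Q$ with stationary vector $\pi$, the Kemeny constant is $K(Q)=\sum_j\pi_j m_{kj}$, where $m_{kj}$ is the expected first passage time from $k$ to $j$ ($m_{kk}=0$), independent of $k$; equivalently $K(Q)=\sum_{\ell=2}^n 1/(1-\lambda_\ell)$, where $1=\lambda_1,\lambda_2,\dots,\lambda_n$ are the eigenvalues of $Q$. The edge $e$ is a cut-edge if the graph obtained by deleting $e$ is disconnected. *)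

theory Defs
  imports "Jordan_Normal_Form.Char_Poly" Complex_Main
begin

text \<open>Vertices are indexed 0..n-1 (JNF convention) instead of 1..n.\<close>

definition adj_rel :: "nat \<Rightarrow> real mat \<Rightarrow> (nat \<times> nat) set" where
  "adj_rel n A = {(k,l). k < n \<and> l < n \<and> k \<noteq> l \<and> A $$ (k,l) > 0}"

definition connected_wgraph :: "nat \<Rightarrow> real mat \<Rightarrow> bool" where
  "connected_wgraph n A \<longleftrightarrow> (\<forall>k<n. \<forall>l<n. (k,l) \<in> (adj_rel n A)\<^sup>*)"

definition delete_edge :: "nat \<Rightarrow> real mat \<Rightarrow> nat \<Rightarrow> nat \<Rightarrow> real mat" where
  "delete_edge n A i j = mat n n (\<lambda>(k,l). if (k = i \<and> l = j) \<or> (k = j \<and> l = i) then 0 else A $$ (k,l))"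

definition is_cut_edge :: "nat \<Rightarrow> real mat \<Rightarrow> nat \<Rightarrow> nat \<Rightarrow> bool" where
  "is_cut_edge n A i j \<longleftrightarrow> \<not> connected_wgraph n (delete_edge n A i j)"

definition stationary_vec :: "real mat \<Rightarrow> (nat \<Rightarrow> real) \<Rightarrow> bool" where
  "stationary_vec Q p \<longleftrightarrow> (let n = dim_row Q in
     (\<forall>k<n. p k \<ge> 0) \<and> (\<forall>k\<ge>n. p k = 0) \<and> (\<Sum>k<n. p k) = 1 \<and>
     (\<forall>l<n. (\<Sum>k<n. p k * Q $$ (k,l)) = p l))"

text \<open>Taboo matrix: transitions avoiding state j.  For k \<noteq> j,
  Prob_k(T_j > t) = sum_l (taboo Q j ^ t)_{kl}, where T_j is the first passage time to j.\<close>
definition taboo :: "real mat \<Rightarrow> nat \<Rightarrow> real mat" where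
  "taboo Q j = mat (dim_row Q) (dim_row Q) (\<lambda>(k,l). if k \<noteq> j \<and> l \<noteq> j then Q $$ (k,l) else 0)"

text \<open>Expected first passage time m_{kj} = sum_{t>=0} Prob_k(T_j > t), with m_{jj} = 0.\<close>
definition mfpt :: "real mat \<Rightarrow> nat \<Rightarrow> nat \<Rightarrow> real" where
  "mfpt Q k j = (if k = j then 0 else (\<Sum>t. \<Sum>l<dim_row Q. (taboo Q j ^\<^sub>m t) $$ (k,l)))"

text \<open>Kemeny constant K(Q) = sum_j pi_j m_{kj}, evaluated at k = 0 (first vertex).\<close>
definition kemeny :: "real mat \<Rightarrow> real" where
  "kemeny Q = (let p = (THE p. stationary_vec Q p) in (\<Sum>j<dim_row Q. p j * mfpt Q 0 j))"

end

(*
  For an irreducible chain with stationary vector pi, m_kj = (Z_jj - Z_kj) / pi_j, where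
  Z = (I - Q + 1 pi^T)^-1 is the fundamental matrix, so Kemeny's constant is tr Z - 1.
  Softening the edge keeps pi = d / vol and changes Z^-1 by the rank-one term
  t a_ij D^-1 v v^T, so by Sherman-Morrison tr Z(t) is an explicit rational function of t
  and f'(0) = a_ij w^T D w with w = Z D^-1 v (reversibility makes v^T Z equal to (D w)^T).
  This is nonnegative, and Cauchy-Schwarz bounds it by a_ij (1/d_i + 1/d_j) (tr Z^2 - 1).
  Triangularising Q = W B W^-1 (Schur), the first column of W is constant, so W^-1 Z^-1 W is
  triangular with diagonal 1, 1 - lambda_2, ..., 1 - lambda_n and
  tr Z^2 = 1 + sum_{l >= 2} (1 - lambda_l)^-2.
  Only t near 0 matters, where P(t) is irreducible because every edge keeps positive weight.
*)

theory Submission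
  imports Defs "Jordan_Normal_Form.Schur_Decomposition"
begin

lemma mat_mult_entry:
  assumes "A \<in> carrier_mat n m" "B \<in> carrier_mat m p" "k < n" "l < p"
  shows "(A * B) $$ (k,l) = (\<Sum>q<m. A $$ (k,q) * B $$ (q,l))"
  using assms by (auto simp: scalar_prod_def lessThan_atLeast0 intro!: sum.cong)

lemma sum_delta_mult:
  fixes f :: "nat \<Rightarrow> real"
  assumes "k < n"
  shows "(\<Sum>m<n. (if m = k then 1 else 0) * f m) = f k"
    and "(\<Sum>m<n. (if k = m then 1 else 0) * f m) = f k"
  using assms by (simp_all add: if_distrib[of "\<lambda>x. x * _"] cong: if_cong)

lemma sum_mult_indicator_diff:
  fixes g :: "nat \<Rightarrow> real"
  assumes "i < n" "j < n" "i \<noteq> j"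
  shows "(\<Sum>l<n. g l * (if l = i then 1 else if l = j then -1 else 0)) = g i - g j"
proof -
  have "(\<Sum>l<n. g l * (if l = i then 1 else if l = j then -1 else 0)) =
        (\<Sum>l<n. (if l = i then g i else 0) + (if l = j then - g j else 0))"
    using assms by (intro sum.cong refl) auto
  also have "\<dots> = g i - g j" unfolding sum.distrib using assms by simp
  finally show ?thesis .
qed

lemma add_le_sum_lessThan:
  fixes f :: "nat \<Rightarrow> real"
  assumes "i < n" "j < n" "i \<noteq> j" "\<And>l. l < n \<Longrightarrow> f l \<ge> 0"
  shows "f i + f j \<le> (\<Sum>l<n. f l)"
proof -
  have "sum f {i,j} \<le> sum f {..<n}" using assms by (intro sum_mono2) auto
  then show ?thesis using assms by simp
qed

lemma square_diff_le_weighted: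
  fixes p q x y :: real
  assumes "x > 0" "y > 0"
  shows "(p - q)^2 \<le> (x * p^2 + y * q^2) * (1/x + 1/y)"
proof -
  have "(x * p^2 + y * q^2) * (1/x + 1/y) - (p - q)^2 = (x * p + y * q)^2 / (x * y)"
    using assms by (simp add: field_simps power2_eq_square)
  moreover have "(x * p + y * q)^2 / (x * y) \<ge> 0" using assms by simp
  ultimately show ?thesis by linarith
qed

lemma pow_mat_Suc_left:
  assumes "B \<in> carrier_mat n n"
  shows "B ^\<^sub>m Suc t = B * B ^\<^sub>m t"
proof (induction t)
  case 0 then show ?case using assms by simp
next
  case (Suc t)
  have "B ^\<^sub>m Suc (Suc t) = (B * B ^\<^sub>m t) * B" using Suc by simp
  also have "\<dots> = B * (B ^\<^sub>m t * B)" using assms by (simp add: assoc_mult_mat[of _ n n _ n _ n])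
  finally show ?case by simp
qed

lemma sherman_morrison_entry:
  fixes N0 Z0 N1 Z1 :: "real mat" and u v :: "nat \<Rightarrow> real" and \<tau> :: real
  assumes carrier: "N0 \<in> carrier_mat n n" "Z0 \<in> carrier_mat n n" "N1 \<in> carrier_mat n n" "Z1 \<in> carrier_mat n n"
    and N0Z0: "N0 * Z0 = 1\<^sub>m n" and Z1N1: "Z1 * N1 = 1\<^sub>m n"
    and N1_entry: "\<And>k l. k < n \<Longrightarrow> l < n \<Longrightarrow> N1 $$ (k,l) = N0 $$ (k,l) - \<tau> * u k * v l"
    and nonsingular: "1 - \<tau> * (\<Sum>m<n. v m * (\<Sum>p<n. Z0 $$ (m,p) * u p)) \<noteq> 0"
    and k: "k < n" and l: "l < n"
  shows "Z1 $$ (k,l) = Z0 $$ (k,l) + \<tau> / (1 - \<tau> * (\<Sum>m<n. v m * (\<Sum>p<n. Z0 $$ (m,p) * u p)))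
            * (\<Sum>p<n. Z0 $$ (k,p) * u p) * (\<Sum>m<n. v m * Z0 $$ (m,l))"
proof -
  define a where "a k = (\<Sum>p<n. Z0 $$ (k,p) * u p)" for k
  define b where "b l = (\<Sum>m<n. v m * Z0 $$ (m,l))" for l
  define \<beta> where "\<beta> = (\<Sum>m<n. v m * a m)"
  define s where "s = \<tau> / (1 - \<tau> * \<beta>)"
  have s: "s * (1 - \<tau> * \<beta>) = \<tau>" using nonsingular unfolding s_def \<beta>_def a_def by simp
  have N0Z0_entry: "(\<Sum>m<n. N0 $$ (k,m) * Z0 $$ (m,l)) = (if k = l then 1 else 0)"
    if "k < n" "l < n" for k l
    using mat_mult_entry[OF carrier(1,2) that] N0Z0 that by simp
  have N0a: "(\<Sum>m<n. N0 $$ (k,m) * a m) = u k" if k: "k < n" for k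
  proof -
    have "(\<Sum>m<n. N0 $$ (k,m) * a m) = (\<Sum>p<n. (\<Sum>m<n. N0 $$ (k,m) * Z0 $$ (m,p)) * u p)"
      unfolding a_def sum_distrib_left sum_distrib_right by (subst sum.swap) (simp add: mult.assoc)
    also have "\<dots> = u k" using N0Z0_entry k by (simp add: sum_delta_mult)
    finally show ?thesis .
  qed
  define Y where "Y = mat n n (\<lambda>(k,l). Z0 $$ (k,l) + s * a k * b l)"
  have Y: "Y \<in> carrier_mat n n" unfolding Y_def by simp
  have N1Y: "N1 * Y = 1\<^sub>m n"
  proof (rule eq_matI)
    fix k l assume "k < dim_row (1\<^sub>m n :: real mat)" and "l < dim_col (1\<^sub>m n :: real mat)"
    then have k: "k < n" and l: "l < n" by auto
    have "(N1 * Y) $$ (k,l) = (\<Sum>m<n. N1 $$ (k,m) * Y $$ (m,l))" using mat_mult_entry[OF carrier(3) Y k l] .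
    also have "\<dots> = (\<Sum>m<n. N0 $$ (k,m) * Z0 $$ (m,l) + (s * b l) * (N0 $$ (k,m) * a m)
                 - (\<tau> * u k) * (v m * Z0 $$ (m,l)) - (\<tau> * s * u k * b l) * (v m * a m))"
      using k l by (intro sum.cong refl) (simp add: N1_entry Y_def algebra_simps)
    also have "\<dots> = (if k = l then 1 else 0) + u k * b l * (s * (1 - \<tau> * \<beta>) - \<tau>)"
      unfolding sum.distrib sum_subtractf sum_distrib_left[symmetric] using N0Z0_entry[OF k l] N0a[OF k]
      by (simp add: b_def \<beta>_def algebra_simps)
    finally show "(N1 * Y) $$ (k,l) = (1\<^sub>m n :: real mat) $$ (k,l)" using s k l by simp
  qed (use carrier Y in auto)
  have "Z1 = (Z1 * N1) * Y" using carrier Y N1Y by (simp add: assoc_mult_mat[of _ n n _ n _ n])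
  then have "Z1 = Y" using Z1N1 Y by simp
  then show ?thesis using k l unfolding Y_def s_def \<beta>_def a_def b_def by simp
qed

lemma inverse_weighted_symmetric:
  fixes N Z :: "real mat" and d :: "nat \<Rightarrow> real"
  assumes carrier: "N \<in> carrier_mat n n" "Z \<in> carrier_mat n n" and NZ: "N * Z = 1\<^sub>m n"
    and sym: "\<And>p m. p < n \<Longrightarrow> m < n \<Longrightarrow> d p * N $$ (p,m) = d m * N $$ (m,p)"
    and k: "k < n" and l: "l < n"
  shows "d k * Z $$ (k,l) = d l * Z $$ (l,k)"
proof -
  have NZ_entry: "(\<Sum>m<n. N $$ (p,m) * Z $$ (m,q)) = (if p = q then 1 else 0)" if "p < n" "q < n" for p q
    using mat_mult_entry[OF carrier that] NZ that by simp
  define X where "X = (\<Sum>p<n. \<Sum>m<n. Z $$ (p,k) * (d p * N $$ (p,m)) * Z $$ (m,l))"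
  have "X = (\<Sum>p<n. Z $$ (p,k) * d p * (\<Sum>m<n. N $$ (p,m) * Z $$ (m,l)))"
    unfolding X_def by (simp add: sum_distrib_left mult.assoc)
  also have "\<dots> = (\<Sum>p<n. (if p = l then 1 else 0) * (Z $$ (p,k) * d p))"
    using NZ_entry l by (intro sum.cong refl) auto
  finally have X_l: "X = d l * Z $$ (l,k)" using l by (simp add: sum_delta_mult)
  have "X = (\<Sum>m<n. \<Sum>p<n. Z $$ (p,k) * (d m * N $$ (m,p)) * Z $$ (m,l))"
    unfolding X_def using sym by (subst sum.swap) (intro sum.cong refl; auto)
  also have "\<dots> = (\<Sum>m<n. d m * Z $$ (m,l) * (\<Sum>p<n. N $$ (m,p) * Z $$ (p,k)))"
    by (simp add: sum_distrib_left mult_ac)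
  also have "\<dots> = (\<Sum>m<n. (if m = k then 1 else 0) * (d m * Z $$ (m,l)))"
    using NZ_entry k by (intro sum.cong refl) auto
  finally show ?thesis using X_l k by (simp add: sum_delta_mult)
qed

lemma trace_similar:
  fixes X W W' :: "real mat"
  assumes X: "X \<in> carrier_mat n n" and W: "W \<in> carrier_mat n n" and W': "W' \<in> carrier_mat n n"
    and WW': "W * W' = 1\<^sub>m n"
  shows "(\<Sum>k<n. (W' * X * W) $$ (k,k)) = (\<Sum>k<n. X $$ (k,k))"
proof -
  have "(\<Sum>k<n. (W' * X * W) $$ (k,k)) = (\<Sum>k<n. \<Sum>q<n. \<Sum>p<n. X $$ (p,q) * (W $$ (q,k) * W' $$ (k,p)))"
  proof (intro sum.cong refl)
    fix k assume k: "k \<in> {..<n}"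
    have "W' * X \<in> carrier_mat n n" using X W' by simp
    then show "(W' * X * W) $$ (k,k) = (\<Sum>q<n. \<Sum>p<n. X $$ (p,q) * (W $$ (q,k) * W' $$ (k,p)))"
      using mat_mult_entry[OF _ W, of "W' * X" n k k] k mat_mult_entry[OF W' X, of k]
      by (simp add: sum_distrib_left sum_distrib_right mult_ac del: assoc_mult_mat)
  qed
  also have "\<dots> = (\<Sum>q<n. \<Sum>p<n. \<Sum>k<n. X $$ (p,q) * (W $$ (q,k) * W' $$ (k,p)))"
    by (subst sum.swap) (intro sum.cong refl sum.swap)
  also have "\<dots> = (\<Sum>q<n. \<Sum>p<n. X $$ (p,q) * (W * W') $$ (q,p))"
    using W W' by (intro sum.cong refl) (simp add: mat_mult_entry[of _ n n _ n] sum_distrib_left del: index_mult_mat)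
  also have "\<dots> = (\<Sum>q<n. \<Sum>p<n. (if p = q then 1 else 0) * X $$ (p,q))"
    unfolding WW' by (intro sum.cong refl) auto
  also have "\<dots> = (\<Sum>q<n. X $$ (q,q))"
    by (intro sum.cong refl) (simp add: sum_delta_mult)
  finally show ?thesis .
qed

lemma upper_triangular_left_inverse:
  fixes M Y :: "real mat"
  assumes M: "M \<in> carrier_mat n n" "upper_triangular M" and Y: "Y \<in> carrier_mat n n"
    and YM: "Y * M = 1\<^sub>m n"
  shows "upper_triangular Y" and "\<And>k. k < n \<Longrightarrow> Y $$ (k,k) * M $$ (k,k) = 1"
proof -
  have "det Y * det M = 1" using det_mult[OF Y M(1)] YM by simp
  then have "det M \<noteq> 0" by auto
  then have "(\<Prod>k = 0..<n. M $$ (k,k)) \<noteq> 0"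
    using det_upper_triangular[OF M(2,1)] M(1) by (simp add: prod_list_diag_prod)
  then have M_diag: "M $$ (k,k) \<noteq> 0" if "k < n" for k using that by auto
  have YM_entry: "(\<Sum>m<n. Y $$ (k,m) * M $$ (m,l)) = (if k = l then 1 else 0)" if "k < n" "l < n" for k l
    using mat_mult_entry[OF Y M(1) that] YM that by simp
  have M_lower: "M $$ (m,l) = 0" if "l < m" "m < n" for m l
    using M that unfolding upper_triangular_def by auto
  have Y_lower: "\<forall>k. l < k \<longrightarrow> k < n \<longrightarrow> Y $$ (k,l) = 0" for l
  proof (induction l rule: less_induct)
    case (less l)
    show ?case
    proof (intro allI impI)
      fix k assume lk: "l < k" and k: "k < n"
      have "0 = (\<Sum>m<n. Y $$ (k,m) * M $$ (m,l))" using YM_entry[OF k, of l] lk k by simp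
      also have "\<dots> = (\<Sum>m<n. if m = l then Y $$ (k,l) * M $$ (l,l) else 0)"
      proof (intro sum.cong refl)
        fix m assume "m \<in> {..<n}"
        then show "Y $$ (k,m) * M $$ (m,l) = (if m = l then Y $$ (k,l) * M $$ (l,l) else 0)"
          using less[of m] lk k M_lower[of l m] by (cases "m < l") auto
      qed
      also have "\<dots> = Y $$ (k,l) * M $$ (l,l)" using lk k by simp
      finally show "Y $$ (k,l) = 0" using M_diag[of l] lk k by simp
    qed
  qed
  then show "upper_triangular Y" using Y unfolding upper_triangular_def by auto
  show "Y $$ (k,k) * M $$ (k,k) = 1" if k: "k < n" for k
  proof -
    have "1 = (\<Sum>m<n. Y $$ (k,m) * M $$ (m,k))" using YM_entry[OF k k] by simp
    also have "\<dots> = (\<Sum>m<n. if m = k then Y $$ (k,k) * M $$ (k,k) else 0)"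
    proof (intro sum.cong refl)
      fix m assume "m \<in> {..<n}"
      then show "Y $$ (k,m) * M $$ (m,k) = (if m = k then Y $$ (k,k) * M $$ (k,k) else 0)"
        using Y_lower[of m] M_lower[of k m] k by (cases "m < k") auto
    qed
    finally show ?thesis using k by simp
  qed
qed

lemma trace_square_upper_triangular:
  fixes Y :: "real mat"
  assumes "Y \<in> carrier_mat n n" "upper_triangular Y"
  shows "(\<Sum>k<n. \<Sum>l<n. Y $$ (k,l) * Y $$ (l,k)) = (\<Sum>k<n. (Y $$ (k,k))^2)"
proof (intro sum.cong refl)
  fix k assume k: "k \<in> {..<n}"
  have "(\<Sum>l<n. Y $$ (k,l) * Y $$ (l,k)) = (\<Sum>l<n. if l = k then (Y $$ (k,k))^2 else 0)"
  proof (intro sum.cong refl)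
    fix l assume l: "l \<in> {..<n}"
    show "Y $$ (k,l) * Y $$ (l,k) = (if l = k then (Y $$ (k,k))^2 else 0)"
      using assms k l unfolding upper_triangular_def
      by (cases "l < k"; cases "k < l") (auto simp: power2_eq_square)
  qed
  then show "(\<Sum>l<n. Y $$ (k,l) * Y $$ (l,k)) = (Y $$ (k,k))^2" using k by simp
qed

definition fundamental_inv :: "nat \<Rightarrow> real mat \<Rightarrow> (nat \<Rightarrow> real) \<Rightarrow> real mat" where
  "fundamental_inv n Q p = mat n n (\<lambda>(k,l). (if k = l then 1 else 0) - Q $$ (k,l) + p l)"

definition fundamental_mat :: "nat \<Rightarrow> real mat \<Rightarrow> (nat \<Rightarrow> real) \<Rightarrow> real mat" where
  "fundamental_mat n Q p = (SOME Z. Z \<in> carrier_mat n n \<and>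
     fundamental_inv n Q p * Z = 1\<^sub>m n \<and> Z * fundamental_inv n Q p = 1\<^sub>m n)"

text \<open>Irreducibility is encoded by a connected graph \<open>G\<close> all of whose edges \<open>Q\<close> charges.\<close>

locale irreducible_chain =
  fixes n :: nat and Q G :: "real mat" and \<pi> :: "nat \<Rightarrow> real"
  assumes carrier: "Q \<in> carrier_mat n n"
    and nonneg: "\<And>k l. k < n \<Longrightarrow> l < n \<Longrightarrow> Q $$ (k,l) \<ge> 0"
    and row_sum: "\<And>k. k < n \<Longrightarrow> (\<Sum>l<n. Q $$ (k,l)) = 1"
    and stationary_pos: "\<And>k. k < n \<Longrightarrow> \<pi> k > 0"
    and stationary_sum: "(\<Sum>k<n. \<pi> k) = 1"
    and stationary: "\<And>l. l < n \<Longrightarrow> (\<Sum>k<n. \<pi> k * Q $$ (k,l)) = \<pi> l"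
    and connected: "connected_wgraph n G"
    and edge_pos: "\<And>k l. (k,l) \<in> adj_rel n G \<Longrightarrow> Q $$ (k,l) > 0"
begin

abbreviation N where "N \<equiv> fundamental_inv n Q \<pi>"
abbreviation Z where "Z \<equiv> fundamental_mat n Q \<pi>"

lemma dim_row: "dim_row Q = n"
  using carrier by simp

text \<open>A positive maximum would propagate, by subharmonicity and because \<open>Q\<close> charges every
  edge, along a path from a maximiser to \<open>j\<close>.\<close>

lemma maximum_principle:
  assumes j: "j < n" and sub: "\<And>k. k < n \<Longrightarrow> k \<noteq> j \<Longrightarrow> x k \<le> (\<Sum>l<n. Q $$ (k,l) * x l)"
    and xj: "x j \<le> 0" and k: "k < n"
  shows "x k \<le> 0"
proof -
  define M where "M = Max (x ` {..<n})"
  have x_le: "\<And>l. l < n \<Longrightarrow> x l \<le> M" unfolding M_def by simp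
  have "M \<in> x ` {..<n}" unfolding M_def using j by (intro Max_in) auto
  then obtain k0 where k0: "k0 < n" "x k0 = M" by auto
  have "M \<le> 0"
  proof (rule ccontr)
    assume M_pos: "\<not> M \<le> 0"
    have "x l = M" if "(k0,l) \<in> (adj_rel n G)\<^sup>*" for l
      using that
    proof (induction rule: rtrancl_induct)
      case base then show ?case using k0 by simp
    next
      case (step y z)
      from step(2) have y: "y < n" and z: "z < n" unfolding adj_rel_def by auto
      have "y \<noteq> j" using step(3) xj M_pos by auto
      then have "M \<le> (\<Sum>l<n. Q $$ (y,l) * x l)" using sub[OF y] step(3) by simp
      moreover have "(\<Sum>l<n. Q $$ (y,l) * (M - x l)) = M - (\<Sum>l<n. Q $$ (y,l) * x l)"
        using row_sum[OF y] by (simp add: right_diff_distrib sum_subtractf sum_distrib_right[symmetric])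
      ultimately have "(\<Sum>l<n. Q $$ (y,l) * (M - x l)) \<le> 0" by simp
      moreover have nonneg_terms: "\<forall>l\<in>{..<n}. Q $$ (y,l) * (M - x l) \<ge> 0"
        using nonneg[OF y] x_le by auto
      ultimately have "(\<Sum>l<n. Q $$ (y,l) * (M - x l)) = 0"
        by (meson order_antisym sum_nonneg)
      then have "\<forall>l\<in>{..<n}. Q $$ (y,l) * (M - x l) = 0"
        using sum_nonneg_eq_0_iff[of "{..<n}" "\<lambda>l. Q $$ (y,l) * (M - x l)"] nonneg_terms by auto
      then have "Q $$ (y,z) * (M - x z) = 0" using z by auto
      then show ?case using edge_pos[OF step(2)] by simp
    qed
    moreover have "(k0,j) \<in> (adj_rel n G)\<^sup>*" using connected k0 j unfolding connected_wgraph_def by auto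
    ultimately show False using xj M_pos by auto
  qed
  then show ?thesis using x_le[OF k] by simp
qed

lemma harmonic_const:
  assumes harmonic: "\<And>k. k < n \<Longrightarrow> (\<Sum>l<n. Q $$ (k,l) * x l) = x k"
    and k: "k < n" and l: "l < n"
  shows "x k = x l"
proof -
  have le: "x a \<le> x b" if a: "a < n" and b: "b < n" for a b
  proof -
    have "x a - x b \<le> 0"
    proof (rule maximum_principle[OF b _ _ a, of "\<lambda>m. x m - x b"])
      fix k assume k: "k < n"
      have "(\<Sum>l<n. Q $$ (k,l) * (x l - x b)) = (\<Sum>l<n. Q $$ (k,l) * x l) - (\<Sum>l<n. Q $$ (k,l)) * x b"
        by (simp add: right_diff_distrib sum_subtractf sum_distrib_right)
      then show "x k - x b \<le> (\<Sum>l<n. Q $$ (k,l) * (x l - x b))" using harmonic[OF k] row_sum[OF k] by simp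
    qed simp
    then show ?thesis by simp
  qed
  show ?thesis using le[OF k l] le[OF l k] by simp
qed

lemma fundamental_inv_carrier: "N \<in> carrier_mat n n"
  unfolding fundamental_inv_def by simp

lemma fundamental_inv_entry:
  "k < n \<Longrightarrow> l < n \<Longrightarrow> N $$ (k,l) = (if k = l then 1 else 0) - Q $$ (k,l) + \<pi> l"
  unfolding fundamental_inv_def by simp

lemma stationary_mult_sum: "(\<Sum>k<n. \<pi> k * (\<Sum>l<n. Q $$ (k,l) * x l)) = (\<Sum>l<n. \<pi> l * x l)"
proof -
  have "(\<Sum>k<n. \<pi> k * (\<Sum>l<n. Q $$ (k,l) * x l)) = (\<Sum>l<n. (\<Sum>k<n. \<pi> k * Q $$ (k,l)) * x l)"
    unfolding sum_distrib_left sum_distrib_right by (subst sum.swap) (simp add: mult.assoc)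
  then show ?thesis using stationary by simp
qed

text \<open>A kernel vector \<open>x\<close> of \<open>N\<close> has \<open>x - Q x = -(\<pi>\<^sup>T x) 1\<close>; pairing with \<open>\<pi>\<close> gives
  \<open>\<pi>\<^sup>T x = 0\<close>, so \<open>x\<close> is harmonic, hence constant, hence zero.\<close>

lemma det_fundamental_inv_nonzero: "det N \<noteq> 0"
proof
  assume "det N = 0"
  then obtain x where x: "x \<in> carrier_vec n" "x \<noteq> 0\<^sub>v n" "N *\<^sub>v x = 0\<^sub>v n"
    using det_0_iff_vec_prod_zero[OF fundamental_inv_carrier] by auto
  define s where "s = (\<Sum>l<n. \<pi> l * x $ l)"
  have kernel: "x $ k - (\<Sum>l<n. Q $$ (k,l) * x $ l) + s = 0" if k: "k < n" for k
  proof -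
    have "0 = (N *\<^sub>v x) $ k" using x(3) k by simp
    also have "\<dots> = (\<Sum>l<n. N $$ (k,l) * x $ l)"
      using x(1) k fundamental_inv_carrier by (auto simp: scalar_prod_def lessThan_atLeast0 intro!: sum.cong)
    also have "\<dots> = (\<Sum>l<n. (if l = k then 1 else 0) * x $ l - Q $$ (k,l) * x $ l + \<pi> l * x $ l)"
      using k by (intro sum.cong) (auto simp: fundamental_inv_entry algebra_simps)
    finally show ?thesis using k unfolding s_def sum.distrib sum_subtractf by (simp add: sum_delta_mult)
  qed
  have "(\<Sum>k<n. \<pi> k * (x $ k - (\<Sum>l<n. Q $$ (k,l) * x $ l) + s)) =
     (\<Sum>k<n. \<pi> k * x $ k) - (\<Sum>k<n. \<pi> k * (\<Sum>l<n. Q $$ (k,l) * x $ l)) + (\<Sum>k<n. \<pi> k) * s"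
    by (simp add: algebra_simps sum.distrib sum_subtractf sum_distrib_right sum_distrib_left)
  then have s0: "s = 0" using kernel unfolding stationary_mult_sum stationary_sum by simp
  have harmonic: "(\<Sum>l<n. Q $$ (k,l) * x $ l) = x $ k" if "k < n" for k using kernel[OF that] s0 by simp
  have n0: "0 < n" using x(1,2) by (cases n) auto
  have const: "x $ k = x $ 0" if "k < n" for k using harmonic_const[OF harmonic that n0] .
  have "s = (\<Sum>l<n. \<pi> l) * x $ 0" unfolding s_def sum_distrib_right by (rule sum.cong) (auto dest: const)
  then have "x $ k = 0" if "k < n" for k using s0 const[OF that] stationary_sum by simp
  then have "x = 0\<^sub>v n" using x(1) by (intro eq_vecI) auto
  with x(2) show False by simp
qed

lemma fundamental_mat: "Z \<in> carrier_mat n n" "N * Z = 1\<^sub>m n" "Z * N = 1\<^sub>m n"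
proof -
  have "N \<in> Units (ring_mat TYPE(real) n undefined)"
    by (rule det_non_zero_imp_unit[OF fundamental_inv_carrier det_fundamental_inv_nonzero])
  then have "\<exists>Z. Z \<in> carrier_mat n n \<and> N * Z = 1\<^sub>m n \<and> Z * N = 1\<^sub>m n"
    unfolding Units_def by (auto simp: ring_mat_simps)
  from someI_ex[OF this] show "Z \<in> carrier_mat n n" "N * Z = 1\<^sub>m n" "Z * N = 1\<^sub>m n"
    unfolding fundamental_mat_def by auto
qed

lemma fundamental_inv_mult_entry:
  "k < n \<Longrightarrow> l < n \<Longrightarrow> (\<Sum>m<n. N $$ (k,m) * Z $$ (m,l)) = (if k = l then 1 else 0)"
  using mat_mult_entry[OF fundamental_inv_carrier fundamental_mat(1), of k l] fundamental_mat(2) by simp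

lemma fundamental_mat_mult_entry:
  "k < n \<Longrightarrow> l < n \<Longrightarrow> (\<Sum>m<n. Z $$ (k,m) * N $$ (m,l)) = (if k = l then 1 else 0)"
  using mat_mult_entry[OF fundamental_mat(1) fundamental_inv_carrier, of k l] fundamental_mat(3) by simp

lemma fundamental_inv_row_sum: "k < n \<Longrightarrow> (\<Sum>l<n. N $$ (k,l)) = 1"
  by (simp add: fundamental_inv_entry sum.distrib sum_subtractf row_sum stationary_sum)

lemma stationary_mult_fundamental_inv:
  assumes p_sum: "(\<Sum>k<n. p k) = 1" and p_stat: "\<And>l. l < n \<Longrightarrow> (\<Sum>k<n. p k * Q $$ (k,l)) = p l"
    and l: "l < n"
  shows "(\<Sum>k<n. p k * N $$ (k,l)) = \<pi> l"
proof -
  have "(\<Sum>k<n. p k * N $$ (k,l)) = (\<Sum>k<n. (if k = l then 1 else 0) * p k - p k * Q $$ (k,l) + p k * \<pi> l)"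
    using l by (intro sum.cong) (auto simp: fundamental_inv_entry algebra_simps)
  then show ?thesis
    unfolding sum.distrib sum_subtractf sum_distrib_right[symmetric] p_stat[OF l] p_sum
    using l by (simp add: sum_delta_mult)
qed

lemma fundamental_mat_row_sum: "k < n \<Longrightarrow> (\<Sum>l<n. Z $$ (k,l)) = 1"
proof -
  assume k: "k < n"
  have "1 = (\<Sum>l<n. \<Sum>m<n. Z $$ (k,m) * N $$ (m,l))" using fundamental_mat_mult_entry k by simp
  also have "\<dots> = (\<Sum>m<n. Z $$ (k,m) * (\<Sum>l<n. N $$ (m,l)))"
    unfolding sum_distrib_left by (rule sum.swap)
  finally show ?thesis using fundamental_inv_row_sum by simp
qed

lemma stationary_eq_fundamental:
  assumes p_sum: "(\<Sum>k<n. p k) = 1" and p_stat: "\<And>l. l < n \<Longrightarrow> (\<Sum>k<n. p k * Q $$ (k,l)) = p l"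
    and l: "l < n"
  shows "p l = (\<Sum>m<n. \<pi> m * Z $$ (m,l))"
proof -
  have "p l = (\<Sum>k<n. (if k = l then 1 else 0) * p k)"
    using l by (simp add: sum_delta_mult)
  also have "\<dots> = (\<Sum>k<n. p k * (\<Sum>m<n. N $$ (k,m) * Z $$ (m,l)))"
    using l by (intro sum.cong refl) (simp add: fundamental_inv_mult_entry)
  also have "\<dots> = (\<Sum>m<n. (\<Sum>k<n. p k * N $$ (k,m)) * Z $$ (m,l))"
    unfolding sum_distrib_left sum_distrib_right by (subst sum.swap) (simp add: mult.assoc)
  also have "\<dots> = (\<Sum>m<n. \<pi> m * Z $$ (m,l))"
    using stationary_mult_fundamental_inv[OF p_sum p_stat] by simp
  finally show ?thesis .
qed

lemma fundamental_mat_stationary: "l < n \<Longrightarrow> (\<Sum>m<n. \<pi> m * Z $$ (m,l)) = \<pi> l"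
  by (rule stationary_eq_fundamental[OF stationary_sum stationary, symmetric])

lemma stationary_unique:
  assumes "(\<Sum>k<n. p k) = 1" "\<And>l. l < n \<Longrightarrow> (\<Sum>k<n. p k * Q $$ (k,l)) = p l" "l < n"
  shows "p l = \<pi> l"
  using stationary_eq_fundamental[OF assms] fundamental_mat_stationary[OF assms(3)] by simp

lemma THE_stationary_vec: "(THE p. stationary_vec Q p) = (\<lambda>k. if k < n then \<pi> k else 0)"
proof (rule the_equality)
  show "stationary_vec Q (\<lambda>k. if k < n then \<pi> k else 0)"
    unfolding stationary_vec_def Let_def dim_row
    using stationary_pos stationary_sum stationary by (auto simp: less_imp_le)
next
  fix p assume "stationary_vec Q p"
  then have "(\<Sum>k<n. p k) = 1" "\<And>l. l < n \<Longrightarrow> (\<Sum>k<n. p k * Q $$ (k,l)) = p l" "\<And>k. k \<ge> n \<Longrightarrow> p k = 0"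
    unfolding stationary_vec_def Let_def dim_row by auto
  then show "p = (\<lambda>k. if k < n then \<pi> k else 0)"
    using stationary_unique by fastforce
qed

lemma fundamental_mat_left_mult_entry:
  assumes k: "k < n" and l: "l < n"
  shows "(\<Sum>m<n. Q $$ (k,m) * Z $$ (m,l)) = Z $$ (k,l) + \<pi> l - (if k = l then 1 else 0)"
proof -
  have "(if k = l then 1 else 0) = (\<Sum>m<n. N $$ (k,m) * Z $$ (m,l))"
    using fundamental_inv_mult_entry k l by simp
  also have "\<dots> = (\<Sum>m<n. (if m = k then 1 else 0) * Z $$ (m,l) - Q $$ (k,m) * Z $$ (m,l) + \<pi> m * Z $$ (m,l))"
    using k by (intro sum.cong) (auto simp: fundamental_inv_entry algebra_simps)
  also have "\<dots> = Z $$ (k,l) - (\<Sum>m<n. Q $$ (k,m) * Z $$ (m,l)) + \<pi> l"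
    unfolding sum.distrib sum_subtractf using k l by (simp add: sum_delta_mult fundamental_mat_stationary)
  finally show ?thesis by simp
qed

text \<open>Mean first passage times \<open>m\<^sub>k\<^sub>j = (Z\<^sub>j\<^sub>j - Z\<^sub>k\<^sub>j) / \<pi>\<^sub>j\<close>. The right-hand side,
  \<open>passage\<close>, solves \<open>m = 1 + Q m\<close> off \<open>j\<close> and is nonnegative, which bounds the partial sums
  of the survival series; the difference of the two solutions is subharmonic off \<open>j\<close>
  and vanishes at \<open>j\<close>, so the maximum principle identifies them.\<close>

context
  fixes j :: nat
  assumes j: "j < n"
begin

definition survival :: "nat \<Rightarrow> nat \<Rightarrow> real" where
  "survival t k = (\<Sum>l<n. (taboo Q j ^\<^sub>m t) $$ (k,l))"

definition passage :: "nat \<Rightarrow> real" where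
  "passage k = (Z $$ (j,j) - Z $$ (k,j)) / \<pi> j"

definition passage_bound :: "nat \<Rightarrow> real" where
  "passage_bound k = (if k = j then 1 else passage k)"

lemma taboo_carrier: "taboo Q j \<in> carrier_mat n n"
  unfolding taboo_def dim_row by simp

lemma taboo_entry:
  "k < n \<Longrightarrow> l < n \<Longrightarrow> taboo Q j $$ (k,l) = (if k \<noteq> j \<and> l \<noteq> j then Q $$ (k,l) else 0)"
  unfolding taboo_def dim_row by simp

lemma taboo_nonneg: "k < n \<Longrightarrow> l < n \<Longrightarrow> taboo Q j $$ (k,l) \<ge> 0"
  using taboo_entry nonneg by simp

lemma survival_0: "k < n \<Longrightarrow> survival 0 k = 1"
  unfolding survival_def using taboo_carrier by simp

lemma survival_Suc:
  assumes k: "k < n"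
  shows "survival (Suc t) k = (\<Sum>m<n. taboo Q j $$ (k,m) * survival t m)"
proof -
  have "survival (Suc t) k = (\<Sum>l<n. \<Sum>m<n. taboo Q j $$ (k,m) * (taboo Q j ^\<^sub>m t) $$ (m,l))"
    unfolding survival_def pow_mat_Suc_left[OF taboo_carrier]
    using k by (intro sum.cong refl mat_mult_entry[OF taboo_carrier]) (auto simp: taboo_carrier)
  also have "\<dots> = (\<Sum>m<n. taboo Q j $$ (k,m) * survival t m)"
    unfolding survival_def sum_distrib_left by (rule sum.swap)
  finally show ?thesis .
qed

lemma survival_nonneg: "k < n \<Longrightarrow> survival t k \<ge> 0"
proof (induction t arbitrary: k)
  case 0 then show ?case by (simp add: survival_0)
next
  case (Suc t) then show ?case
    by (auto simp: survival_Suc intro!: sum_nonneg mult_nonneg_nonneg taboo_nonneg)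
qed

lemma passage_eq:
  assumes k: "k < n" and kj: "k \<noteq> j"
  shows "passage k = 1 + (\<Sum>m<n. Q $$ (k,m) * passage m)"
proof -
  have "(\<Sum>m<n. Q $$ (k,m) * passage m) =
      ((\<Sum>m<n. Q $$ (k,m)) * Z $$ (j,j) - (\<Sum>m<n. Q $$ (k,m) * Z $$ (m,j))) / \<pi> j"
    unfolding passage_def sum_divide_distrib sum_distrib_right sum_subtractf[symmetric]
    by (rule sum.cong) (simp_all add: algebra_simps diff_divide_distrib)
  also have "\<dots> = passage k - 1"
    unfolding row_sum[OF k] fundamental_mat_left_mult_entry[OF k j] passage_def
    using kj stationary_pos[OF j] by (simp add: field_simps)
  finally show ?thesis by simp
qed

lemma passage_nonneg:
  assumes k: "k < n"
  shows "passage k \<ge> 0"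
proof -
  have "- passage k \<le> 0"
  proof (rule maximum_principle[OF j _ _ k])
    fix k assume "k < n" "k \<noteq> j"
    then show "- passage k \<le> (\<Sum>l<n. Q $$ (k,l) * - passage l)"
      using passage_eq[of k] by (simp add: sum_negf)
  qed (simp add: passage_def)
  then show ?thesis by simp
qed

lemma taboo_mult_passage_bound:
  assumes k: "k < n"
  shows "(\<Sum>m<n. taboo Q j $$ (k,m) * passage_bound m) = passage_bound k - 1"
proof (cases "k = j")
  case True then show ?thesis using k by (simp add: taboo_entry passage_bound_def)
next
  case False
  have "(\<Sum>m<n. taboo Q j $$ (k,m) * passage_bound m) = (\<Sum>m<n. Q $$ (k,m) * passage m)"
    using k False by (intro sum.cong) (auto simp: taboo_entry passage_bound_def passage_def)
  then show ?thesis using passage_eq[OF k False] False by (simp add: passage_bound_def)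
qed

lemma sum_survival_le: "k < n \<Longrightarrow> (\<Sum>t<T. survival t k) \<le> passage_bound k"
proof (induction T arbitrary: k)
  case 0 then show ?case using passage_nonneg by (simp add: passage_bound_def)
next
  case (Suc T)
  have "(\<Sum>t<Suc T. survival t k) = 1 + (\<Sum>t<T. \<Sum>m<n. taboo Q j $$ (k,m) * survival t m)"
    unfolding sum.lessThan_Suc_shift using Suc(2) by (simp add: survival_0 survival_Suc)
  also have "\<dots> = 1 + (\<Sum>m<n. taboo Q j $$ (k,m) * (\<Sum>t<T. survival t m))"
    unfolding sum_distrib_left by (subst sum.swap) simp
  also have "\<dots> \<le> 1 + (\<Sum>m<n. taboo Q j $$ (k,m) * passage_bound m)"
    using Suc taboo_nonneg by (intro add_left_mono sum_mono mult_left_mono) auto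
  finally show ?case using taboo_mult_passage_bound[OF Suc(2)] by simp
qed

lemma summable_survival: "k < n \<Longrightarrow> summable (\<lambda>t. survival t k)"
  by (rule summableI_nonneg_bounded[where x="passage_bound k"]) (auto simp: survival_nonneg sum_survival_le)

lemma suminf_survival_eq:
  assumes k: "k < n"
  shows "(\<Sum>t. survival t k) = 1 + (\<Sum>m<n. taboo Q j $$ (k,m) * (\<Sum>t. survival t m))"
proof -
  have "(\<Sum>t. survival (Suc t) k) = (\<Sum>t. \<Sum>m<n. taboo Q j $$ (k,m) * survival t m)"
    using survival_Suc[OF k] by simp
  also have "\<dots> = (\<Sum>m<n. \<Sum>t. taboo Q j $$ (k,m) * survival t m)"
    by (rule suminf_sum) (auto intro: summable_mult summable_survival)
  also have "\<dots> = (\<Sum>m<n. taboo Q j $$ (k,m) * (\<Sum>t. survival t m))"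
    by (intro sum.cong refl suminf_mult summable_survival) auto
  finally show ?thesis
    using suminf_split_head[OF summable_survival[OF k]] survival_0[OF k] by simp
qed

lemma suminf_survival_eq_passage:
  assumes k: "k < n" and kj: "k \<noteq> j"
  shows "(\<Sum>t. survival t k) = passage k"
proof -
  define x where "x m = (if m = j then 0 else passage m - (\<Sum>t. survival t m))" for m
  have "x k \<le> 0"
  proof (rule maximum_principle[OF j _ _ k])
    fix k assume k: "k < n" and kj: "k \<noteq> j"
    have "x k = (\<Sum>m<n. Q $$ (k,m) * passage m - taboo Q j $$ (k,m) * (\<Sum>t. survival t m))"
      unfolding x_def using passage_eq[OF k kj] suminf_survival_eq[OF k] kj by (simp add: sum_subtractf)
    also have "\<dots> = (\<Sum>m<n. Q $$ (k,m) * x m)"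
      using k kj by (intro sum.cong) (auto simp: x_def taboo_entry passage_def algebra_simps)
    finally show "x k \<le> (\<Sum>m<n. Q $$ (k,m) * x m)" by simp
  qed (simp add: x_def)
  moreover have "(\<Sum>t. survival t k) \<le> passage_bound k"
    by (rule suminf_le_const[OF summable_survival[OF k]]) (simp add: sum_survival_le k)
  ultimately show ?thesis using kj by (simp add: x_def passage_bound_def)
qed

lemma mfpt_eq_fundamental:
  assumes k: "k < n"
  shows "mfpt Q k j = (Z $$ (j,j) - Z $$ (k,j)) / \<pi> j"
proof (cases "k = j")
  case True then show ?thesis by (simp add: mfpt_def)
next
  case False
  have "mfpt Q k j = (\<Sum>t. survival t k)" unfolding mfpt_def survival_def dim_row using False by simp
  then show ?thesis using suminf_survival_eq_passage[OF k False] by (simp add: passage_def)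
qed

end

lemma kemeny_eq_trace:
  assumes n0: "0 < n"
  shows "kemeny Q = (\<Sum>k<n. Z $$ (k,k)) - 1"
proof -
  have "kemeny Q = (\<Sum>j<n. \<pi> j * mfpt Q 0 j)" unfolding kemeny_def Let_def THE_stationary_vec dim_row by simp
  also have "\<dots> = (\<Sum>j<n. Z $$ (j,j) - Z $$ (0,j))"
  proof (intro sum.cong refl)
    fix j assume "j \<in> {..<n}"
    then show "\<pi> j * mfpt Q 0 j = Z $$ (j,j) - Z $$ (0,j)"
      using mfpt_eq_fundamental[OF _ n0, of j] stationary_pos[of j] by simp
  qed
  also have "\<dots> = (\<Sum>k<n. Z $$ (k,k)) - 1" using fundamental_mat_row_sum[OF n0] by (simp add: sum_subtractf)
  finally show ?thesis .
qed

text \<open>Schur-triangularise \<open>Q = W B W'\<close> with \<open>B\<^sub>0\<^sub>0 = 1\<close>. The first column of \<open>W\<close> is then harmonic,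
  hence constant, so \<open>W' 1\<close> is a multiple of \<open>e\<^sub>0\<close> and \<open>W' N W = I - B + (W' 1)(\<pi>\<^sup>T W)\<close> is
  still upper triangular.\<close>

lemma fundamental_inv_triangularizable:
  assumes cp: "char_poly Q = (\<Prod>l\<leftarrow>ls. [:- l, 1:])" and l0: "ls ! 0 = 1" and n0: "0 < n"
  obtains W W' where "W \<in> carrier_mat n n" "W' \<in> carrier_mat n n" "W * W' = 1\<^sub>m n" "W' * W = 1\<^sub>m n"
    and "upper_triangular (W' * N * W)" "(W' * N * W) $$ (0,0) = 1"
    and "\<And>l. 0 < l \<Longrightarrow> l < n \<Longrightarrow> (W' * N * W) $$ (l,l) = 1 - ls ! l"
proof -
  obtain B W W' where "schur_decomposition Q ls = (B,W,W')"
    by (cases "schur_decomposition Q ls") auto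
  from schur_decomposition[OF carrier cp this]
  have sim: "similar_mat_wit Q B W W'" and B_ut: "upper_triangular B" and B_diag: "diag_mat B = ls"
    by auto
  from sim have B: "B \<in> carrier_mat n n" and W: "W \<in> carrier_mat n n" and W': "W' \<in> carrier_mat n n"
    and WW': "W * W' = 1\<^sub>m n" and W'W: "W' * W = 1\<^sub>m n" and QB: "Q = W * B * W'"
    unfolding similar_mat_wit_def Let_def dim_row by auto
  have B_entry: "B $$ (l,l) = ls ! l" if "l < n" for l
    using B_diag B that unfolding diag_mat_def by auto
  have B_lower: "B $$ (k,l) = 0" if "l < k" "k < n" for k l
    using B_ut that B unfolding upper_triangular_def by auto
  have QW: "Q * W = W * B"
  proof -
    have "Q * W = W * B * (W' * W)" unfolding QB using B W W' by (simp add: assoc_mult_mat[of _ n n _ n _ n])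
    then show ?thesis using B W W'W by simp
  qed
  have harmonic: "(\<Sum>l<n. Q $$ (k,l) * W $$ (l,0)) = W $$ (k,0)" if k: "k < n" for k
  proof -
    have "(\<Sum>l<n. Q $$ (k,l) * W $$ (l,0)) = (\<Sum>m<n. W $$ (k,m) * B $$ (m,0))"
      using mat_mult_entry[OF carrier W k n0] mat_mult_entry[OF W B k n0] QW by simp
    also have "\<dots> = (\<Sum>m<n. if m = 0 then W $$ (k,0) else 0)"
      using B_lower B_entry[OF n0] l0 by (intro sum.cong refl) auto
    finally show ?thesis using n0 by simp
  qed
  define c where "c = W $$ (0,0)"
  have W_col0: "W $$ (k,0) = c" if "k < n" for k
    unfolding c_def using harmonic_const[of "\<lambda>l. W $$ (l,0)", OF harmonic that n0] .
  have W'_row_sum: "c * (\<Sum>m<n. W' $$ (k,m)) = (if k = 0 then 1 else 0)" if k: "k < n" for k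
  proof -
    have "(if k = 0 then 1 else 0) = (\<Sum>m<n. W' $$ (k,m) * W $$ (m,0))"
      using W'W k n0 mat_mult_entry[OF W' W k n0] by simp
    also have "\<dots> = c * (\<Sum>m<n. W' $$ (k,m))" using W_col0 by (simp add: sum_distrib_left mult.commute)
    finally show ?thesis by simp
  qed
  have c: "c \<noteq> 0" using W'_row_sum[OF n0] by auto
  define \<sigma> where "\<sigma> l = (\<Sum>q<n. \<pi> q * W $$ (q,l))" for l
  have \<sigma>0: "\<sigma> 0 = c" unfolding \<sigma>_def using W_col0 stationary_sum by (simp add: sum_distrib_right[symmetric])
  define M where "M = W' * N * W"
  have M: "M \<in> carrier_mat n n" unfolding M_def using W W' fundamental_inv_carrier by simp
  have NW: "(N * W) $$ (p,l) = W $$ (p,l) - (W * B) $$ (p,l) + \<sigma> l" if "p < n" "l < n" for p l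
  proof -
    have "(N * W) $$ (p,l) = (\<Sum>q<n. (if p = q then 1 else 0) * W $$ (q,l) - Q $$ (p,q) * W $$ (q,l) + \<pi> q * W $$ (q,l))"
      using that W fundamental_inv_carrier
      by (simp add: mat_mult_entry[of _ n n] fundamental_inv_entry algebra_simps del: index_mult_mat)
    also have "\<dots> = W $$ (p,l) - (Q * W) $$ (p,l) + \<sigma> l"
      unfolding sum.distrib sum_subtractf \<sigma>_def using that W carrier
      by (simp add: sum_delta_mult mat_mult_entry[of _ n n] del: index_mult_mat)
    finally show ?thesis unfolding QW .
  qed
  have M_entry: "M $$ (k,l) = (if k = l then 1 else 0) - B $$ (k,l) + (if k = 0 then \<sigma> l / c else 0)"
    if k: "k < n" and l: "l < n" for k l
  proof -
    have NW_carrier: "N * W \<in> carrier_mat n n" using W fundamental_inv_carrier by simp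
    have WB: "W * B \<in> carrier_mat n n" using W B by simp
    have "M = W' * (N * W)" unfolding M_def using W W' fundamental_inv_carrier
      by (simp add: assoc_mult_mat[of _ n n _ n _ n])
    then have "M $$ (k,l) = (\<Sum>p<n. W' $$ (k,p) * (N * W) $$ (p,l))"
      using mat_mult_entry[OF W' NW_carrier k l] by simp
    also have "\<dots> = (\<Sum>p<n. W' $$ (k,p) * W $$ (p,l) - W' $$ (k,p) * (W * B) $$ (p,l) + W' $$ (k,p) * \<sigma> l)"
      using l by (intro sum.cong refl) (simp add: NW algebra_simps)
    also have "\<dots> = (W' * W) $$ (k,l) - (W' * (W * B)) $$ (k,l) + (\<Sum>p<n. W' $$ (k,p)) * \<sigma> l"
      unfolding sum.distrib sum_subtractf sum_distrib_right
      using mat_mult_entry[OF W' W k l] mat_mult_entry[OF W' WB k l] by (simp del: index_mult_mat)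
    also have "W' * (W * B) = B" using B W W' W'W by (simp add: assoc_mult_mat[of _ n n _ n _ n, symmetric])
    also have "(\<Sum>p<n. W' $$ (k,p)) * \<sigma> l = (if k = 0 then \<sigma> l / c else 0)"
      using W'_row_sum[OF k] c by (auto simp: field_simps)
    finally show ?thesis using W'W k l by simp
  qed
  show thesis
  proof (rule that[OF W W' WW' W'W, folded M_def])
    show "upper_triangular M" unfolding upper_triangular_def using M M_entry B_lower by auto
    show "M $$ (0,0) = 1" using M_entry[OF n0 n0] B_entry[OF n0] l0 \<sigma>0 c by simp
    show "M $$ (l,l) = 1 - ls ! l" if "0 < l" "l < n" for l
      using M_entry[OF that(2) that(2)] B_entry[OF that(2)] that by simp
  qed
qed

lemma trace_fundamental_square:
  assumes cp: "char_poly Q = (\<Prod>l\<leftarrow>ls. [:- l, 1:])" and l0: "ls ! 0 = 1" and n0: "0 < n"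
  shows "(\<Sum>k<n. \<Sum>l<n. Z $$ (k,l) * Z $$ (l,k)) = 1 + (\<Sum>l\<in>{1..<n}. 1 / (1 - ls ! l)^2)"
proof -
  obtain W W' where W: "W \<in> carrier_mat n n" and W': "W' \<in> carrier_mat n n"
    and WW': "W * W' = 1\<^sub>m n" and W'W: "W' * W = 1\<^sub>m n"
    and M_ut: "upper_triangular (W' * N * W)" and M00: "(W' * N * W) $$ (0,0) = 1"
    and M_diag: "\<And>l. 0 < l \<Longrightarrow> l < n \<Longrightarrow> (W' * N * W) $$ (l,l) = 1 - ls ! l"
    using fundamental_inv_triangularizable[OF cp l0 n0] by blast
  define M where "M = W' * N * W"
  define Y where "Y = W' * Z * W"
  note carriers = W W' fundamental_inv_carrier fundamental_mat(1)
  have M: "M \<in> carrier_mat n n" and Y: "Y \<in> carrier_mat n n"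
    unfolding M_def Y_def using carriers by auto
  have cancel: "W * (W' * X) = X" "Z * (N * X) = X" if "X \<in> carrier_mat n n" for X
    using carriers WW' fundamental_mat(3) that by (simp_all add: assoc_mult_mat[of _ n n _ n _ n, symmetric])
  have "Y * M = 1\<^sub>m n" unfolding M_def Y_def using carriers cancel W'W
    by (simp add: assoc_mult_mat[of _ n n _ n _ n])
  note Y_inv = upper_triangular_left_inverse[OF M M_ut[folded M_def] Y this]
  have YY: "Y * Y = W' * (Z * Z) * W" unfolding Y_def using carriers cancel
    by (simp add: assoc_mult_mat[of _ n n _ n _ n])
  have "(\<Sum>k<n. \<Sum>l<n. Z $$ (k,l) * Z $$ (l,k)) = (\<Sum>k<n. (Z * Z) $$ (k,k))"
    using carriers by (simp add: mat_mult_entry[of _ n n] del: index_mult_mat)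
  also have "\<dots> = (\<Sum>k<n. (Y * Y) $$ (k,k))"
    unfolding YY using trace_similar[of "Z * Z" n W W'] carriers WW' by simp
  also have "\<dots> = (\<Sum>k<n. \<Sum>l<n. Y $$ (k,l) * Y $$ (l,k))"
    using Y by (simp add: mat_mult_entry[of _ n n] del: index_mult_mat)
  also have "\<dots> = (\<Sum>k<n. (Y $$ (k,k))^2)" by (rule trace_square_upper_triangular[OF Y Y_inv(1)])
  also have "\<dots> = (Y $$ (0,0))^2 + (\<Sum>k\<in>{1..<n}. (Y $$ (k,k))^2)"
    using n0 by (simp add: lessThan_atLeast0 sum.atLeast_Suc_lessThan)
  also have "\<dots> = 1 + (\<Sum>l\<in>{1..<n}. 1 / (1 - ls ! l)^2)"
  proof -
    have "Y $$ (0,0) = 1" using Y_inv(2)[OF n0] M00 unfolding M_def by simp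
    moreover have "(Y $$ (k,k))^2 = 1 / (1 - ls ! k)^2" if "k \<in> {1..<n}" for k
    proof -
      have Ykk: "Y $$ (k,k) * (1 - ls ! k) = 1" using Y_inv(2)[of k] M_diag[of k] that unfolding M_def by simp
      then have "1 - ls ! k \<noteq> 0" by auto
      with Ykk have "Y $$ (k,k) = 1 / (1 - ls ! k)" by (simp add: field_simps)
      then show ?thesis by (simp add: power_one_over)
    qed
    ultimately show ?thesis by simp
  qed
  finally show ?thesis .
qed

end

locale edge_softening =
  fixes n i j :: nat and A :: "real mat" and d v :: "nat \<Rightarrow> real" and At P :: "real \<Rightarrow> real mat"
  assumes A_sym: "\<forall>k<n. \<forall>l<n. A $$ (k,l) = A $$ (l,k)"
    and A_nonneg: "\<forall>k<n. \<forall>l<n. A $$ (k,l) \<ge> 0"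
    and d_def: "d = (\<lambda>k. \<Sum>l<n. A $$ (k,l))"
    and d_pos: "\<forall>k<n. d k > 0"
    and conn: "connected_wgraph n A"
    and ij: "i < n" "j < n" "i \<noteq> j"
    and edge: "A $$ (i,j) > 0"
    and v_def: "v = (\<lambda>k. if k = i then 1 else if k = j then -1 else 0)"
    and At_def: "At = (\<lambda>t. mat n n (\<lambda>(k,l). A $$ (k,l) + t * A $$ (i,j) * v k * v l))"
    and P_def: "P = (\<lambda>t. mat n n (\<lambda>(k,l). At t $$ (k,l) / d k))"
begin

definition stat :: "nat \<Rightarrow> real" where
  "stat k = d k / (\<Sum>l<n. d l)"

abbreviation Z0 where "Z0 \<equiv> fundamental_mat n (P 0) stat"

definition potential :: "nat \<Rightarrow> real" where
  "potential k = Z0 $$ (k,i) / d i - Z0 $$ (k,j) / d j"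

definition energy :: real where
  "energy = (\<Sum>k<n. d k * (potential k)^2)"

lemma d_gt_0: "k < n \<Longrightarrow> d k > 0"
  using d_pos by simp

lemma sum_mult_v: "(\<Sum>l<n. g l * v l) = g i - g j"
  using sum_mult_indicator_diff[OF ij] by (simp add: v_def)

lemma P_entry: "k < n \<Longrightarrow> l < n \<Longrightarrow> P t $$ (k,l) = (A $$ (k,l) + t * A $$ (i,j) * v k * v l) / d k"
  unfolding P_def At_def by simp

lemma softened_weight_ge:
  assumes t: "0 \<le> t" and k: "k < n" and l: "l < n"
  shows "(1 - t) * A $$ (k,l) \<le> A $$ (k,l) + t * A $$ (i,j) * v k * v l"
proof (cases "(k = i \<and> l = j) \<or> (k = j \<and> l = i)")
  case True
  then show ?thesis using A_sym ij by (auto simp: v_def algebra_simps)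
next
  case False
  then have "v k * v l \<ge> 0" by (auto simp: v_def)
  then have "t * A $$ (i,j) * v k * v l \<ge> 0" using t edge by (simp add: mult.assoc)
  then show ?thesis using A_nonneg k l t by (simp add: algebra_simps)
qed

lemma softened_row_sum: "(\<Sum>l<n. A $$ (k,l) + t * A $$ (i,j) * v k * v l) = d k"
  using sum_mult_v[of "\<lambda>_. t * A $$ (i,j) * v k"] by (simp add: sum.distrib d_def)

lemma P_irreducible_chain:
  assumes t: "0 \<le> t" "t < 1"
  shows "irreducible_chain n (P t) A stat"
proof -
  have vol: "(\<Sum>l<n. d l) > 0" using d_pos ij by (intro sum_pos) auto
  have weight_nonneg: "A $$ (k,l) + t * A $$ (i,j) * v k * v l \<ge> 0" if kl: "k < n" "l < n" for k l
  proof -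
    have "(1 - t) * A $$ (k,l) \<ge> 0" using A_nonneg t kl by simp
    then show ?thesis using softened_weight_ge[OF t(1) kl] by linarith
  qed
  have weight_pos: "A $$ (k,l) + t * A $$ (i,j) * v k * v l > 0" if kl: "(k,l) \<in> adj_rel n A" for k l
  proof -
    from kl have "k < n" "l < n" "(1 - t) * A $$ (k,l) > 0" using t unfolding adj_rel_def by auto
    then show ?thesis using softened_weight_ge[OF t(1)] by (meson less_le_trans)
  qed
  show ?thesis
  proof
    show "P t \<in> carrier_mat n n" unfolding P_def by simp
    show "P t $$ (k,l) \<ge> 0" if "k < n" "l < n" for k l
      using that weight_nonneg[OF that] d_gt_0[OF that(1)] by (simp add: P_entry)
    show "(\<Sum>l<n. P t $$ (k,l)) = 1" if "k < n" for k
      using that d_gt_0[OF that] softened_row_sum[of k t] by (simp add: P_entry sum_divide_distrib[symmetric])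
    show "stat k > 0" if "k < n" for k using that d_pos vol by (simp add: stat_def)
    show "(\<Sum>k<n. stat k) = 1" using vol by (simp add: stat_def sum_divide_distrib[symmetric])
    show "(\<Sum>k<n. stat k * P t $$ (k,l)) = stat l" if l: "l < n" for l
    proof -
      have "(\<Sum>k<n. stat k * P t $$ (k,l)) = (\<Sum>k<n. A $$ (l,k) + t * A $$ (i,j) * v l * v k) / (\<Sum>l<n. d l)"
        unfolding sum_divide_distrib
      proof (intro sum.cong refl)
        fix k assume "k \<in> {..<n}"
        then show "stat k * P t $$ (k,l) = (A $$ (l,k) + t * A $$ (i,j) * v l * v k) / (\<Sum>l<n. d l)"
          using l d_gt_0[of k] vol A_sym by (simp add: P_entry stat_def field_simps)
      qed
      then show ?thesis using softened_row_sum by (simp add: stat_def)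
    qed
    show "connected_wgraph n A" by (rule conn)
    show "P t $$ (k,l) > 0" if "(k,l) \<in> adj_rel n A" for k l
      using that weight_pos d_pos unfolding adj_rel_def by (simp add: P_entry)
  qed
qed

lemma fundamental_inv_P:
  assumes "k < n" "l < n"
  shows "fundamental_inv n (P t) stat $$ (k,l) =
     fundamental_inv n (P 0) stat $$ (k,l) - t * A $$ (i,j) * (v k / d k) * v l"
  unfolding fundamental_inv_def using assms d_gt_0[OF assms(1)] by (simp add: P_entry field_simps)

lemma d_fundamental_mat_symmetric:
  assumes "k < n" "l < n"
  shows "d k * Z0 $$ (k,l) = d l * Z0 $$ (l,k)"
proof (rule inverse_weighted_symmetric[OF _ _ _ _ assms])
  interpret irreducible_chain n "P 0" A stat by (rule P_irreducible_chain) auto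
  show "fundamental_inv n (P 0) stat \<in> carrier_mat n n" "Z0 \<in> carrier_mat n n"
    "fundamental_inv n (P 0) stat * Z0 = 1\<^sub>m n"
    using fundamental_inv_carrier fundamental_mat by auto
  show "d p * fundamental_inv n (P 0) stat $$ (p,m) = d m * fundamental_inv n (P 0) stat $$ (m,p)"
    if "p < n" "m < n" for p m
    using that d_pos A_sym by (auto simp: fundamental_inv_entry P_entry stat_def field_simps)
qed

lemma fundamental_mat_transpose: "k < n \<Longrightarrow> l < n \<Longrightarrow> Z0 $$ (k,l) = d l * Z0 $$ (l,k) / d k"
  using d_fundamental_mat_symmetric[of k l] d_gt_0[of k] by (simp add: field_simps)

text \<open>Sherman--Morrison for the rank-one update \<open>N(t) = N(0) - t a\<^sub>i\<^sub>j D\<^sup>-\<^sup>1 v v\<^sup>T\<close>; by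
  reversibility \<open>v\<^sup>T Z\<^sub>0 = (D Z\<^sub>0 D\<^sup>-\<^sup>1 v)\<^sup>T\<close>, so the trace correction is a multiple of
  \<open>energy\<close>.\<close>

lemma kemeny_P_eq:
  assumes t: "0 \<le> t" "t < 1"
    and nonsingular: "t * A $$ (i,j) * (potential i - potential j) \<noteq> 1"
  shows "kemeny (P t) = kemeny (P 0) +
           t * A $$ (i,j) / (1 - t * A $$ (i,j) * (potential i - potential j)) * energy"
proof -
  interpret chain0: irreducible_chain n "P 0" A stat by (rule P_irreducible_chain) auto
  interpret chain: irreducible_chain n "P t" A stat by (rule P_irreducible_chain[OF t])
  have n0: "0 < n" using ij by simp
  have left: "(\<Sum>p<n. Z0 $$ (k,p) * (v p / d p)) = potential k" for k
    using sum_mult_v[of "\<lambda>p. Z0 $$ (k,p) / d p"] by (simp add: potential_def)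
  have right: "(\<Sum>m<n. v m * Z0 $$ (m,l)) = d l * potential l" if "l < n" for l
  proof -
    have "(\<Sum>m<n. v m * Z0 $$ (m,l)) = Z0 $$ (i,l) - Z0 $$ (j,l)"
      using sum_mult_v[of "\<lambda>m. Z0 $$ (m,l)"] by (simp add: mult.commute)
    then show ?thesis
      using fundamental_mat_transpose[OF ij(1) that] fundamental_mat_transpose[OF ij(2) that]
      by (simp add: potential_def right_diff_distrib)
  qed
  have \<beta>: "(\<Sum>m<n. v m * potential m) = potential i - potential j"
    using sum_mult_v[of potential] by (simp add: mult.commute)
  have Zt_diag: "fundamental_mat n (P t) stat $$ (k,k) = Z0 $$ (k,k) +
      t * A $$ (i,j) / (1 - t * A $$ (i,j) * (potential i - potential j)) * (d k * (potential k)^2)"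
    if k: "k < n" for k
  proof -
    have "1 - t * A $$ (i,j) * (\<Sum>m<n. v m * (\<Sum>p<n. Z0 $$ (m,p) * (v p / d p))) \<noteq> 0"
      using nonsingular unfolding left \<beta> by simp
    from sherman_morrison_entry[where \<tau> = "t * A $$ (i,j)" and u = "\<lambda>k. v k / d k",
        OF chain0.fundamental_inv_carrier chain0.fundamental_mat(1) chain.fundamental_inv_carrier
        chain.fundamental_mat(1) chain0.fundamental_mat(2) chain.fundamental_mat(3) fundamental_inv_P this k k]
    show ?thesis unfolding left right[OF k] \<beta> by (simp add: power2_eq_square mult_ac)
  qed
  show ?thesis
    unfolding chain.kemeny_eq_trace[OF n0] chain0.kemeny_eq_trace[OF n0] energy_def
    by (simp add: Zt_diag sum.distrib sum_distrib_left)
qed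

lemma kemeny_P_has_derivative:
  "((\<lambda>t. kemeny (P t)) has_real_derivative A $$ (i,j) * energy) (at 0 within {0..1})"
proof -
  define \<beta> where "\<beta> = A $$ (i,j) * (potential i - potential j)"
  define g where "g t = kemeny (P 0) + t * A $$ (i,j) / (1 - t * \<beta>) * energy" for t
  have "\<forall>\<^sub>F t in at 0 within {0..1}. t \<in> {0..1::real}" by (simp add: eventually_at_filter)
  moreover have "\<forall>\<^sub>F t in at 0 within {0..1}. t < (1::real)"
    by (rule order_tendstoD(2)[where f = "\<lambda>t. t"]) (auto intro!: tendsto_eq_intros)
  moreover have "\<forall>\<^sub>F t in at 0 within {0..1}. t * \<beta> < 1"
    by (rule order_tendstoD(2)[where f = "\<lambda>t. t * \<beta>"]) (auto intro!: tendsto_eq_intros)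
  ultimately have eventually_eq: "\<forall>\<^sub>F t in at 0 within {0..1}. kemeny (P t) = g t"
  proof eventually_elim
    case (elim t)
    then have "t * A $$ (i,j) * (potential i - potential j) \<noteq> 1" by (simp add: \<beta>_def mult.assoc)
    with elim have "kemeny (P t) = kemeny (P 0) +
        t * A $$ (i,j) / (1 - t * A $$ (i,j) * (potential i - potential j)) * energy"
      by (intro kemeny_P_eq) auto
    then show ?case by (simp add: g_def \<beta>_def mult.assoc)
  qed
  have g_derivative: "(g has_real_derivative A $$ (i,j) * energy) (at 0 within {0..1})"
    unfolding g_def by (auto intro!: derivative_eq_intros)
  have "kemeny (P 0) = g 0" by (simp add: g_def)
  from has_field_derivative_cong_eventually[OF eventually_eq this] g_derivative show ?thesis by simp
qed

lemma energy_nonneg: "energy \<ge> 0"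
  unfolding energy_def using d_pos by (intro sum_nonneg) auto

lemma weighted_square_sum_eq_trace:
  "(\<Sum>k<n. \<Sum>l<n. d k * d l * (Z0 $$ (k,l) / d l - 1 / (\<Sum>m<n. d m))^2) =
     (\<Sum>k<n. \<Sum>l<n. Z0 $$ (k,l) * Z0 $$ (l,k)) - 1"
proof -
  interpret irreducible_chain n "P 0" A stat by (rule P_irreducible_chain) auto
  have "(\<Sum>k<n. \<Sum>l<n. d k * d l * (Z0 $$ (k,l) / d l - 1 / (\<Sum>m<n. d m))^2) =
      (\<Sum>k<n. \<Sum>l<n. (Z0 $$ (k,l) - stat l) * (Z0 $$ (l,k) - stat k))"
  proof (intro sum.cong refl)
    fix k l assume "k \<in> {..<n}" "l \<in> {..<n}"
    then have "Z0 $$ (l,k) = d k * Z0 $$ (k,l) / d l" "d l > 0"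
      using fundamental_mat_transpose[of l k] d_gt_0[of l] by auto
    then show "d k * d l * (Z0 $$ (k,l) / d l - 1 / (\<Sum>m<n. d m))^2 = (Z0 $$ (k,l) - stat l) * (Z0 $$ (l,k) - stat k)"
      by (simp add: stat_def power2_eq_square field_simps)
  qed
  also have "\<dots> = (\<Sum>k<n. \<Sum>l<n. Z0 $$ (k,l) * Z0 $$ (l,k)) - (\<Sum>k<n. stat k * (\<Sum>l<n. Z0 $$ (k,l)))
      - (\<Sum>k<n. \<Sum>l<n. stat l * Z0 $$ (l,k)) + (\<Sum>k<n. stat k * (\<Sum>l<n. stat l))"
    by (simp add: algebra_simps sum.distrib sum_subtractf sum_distrib_left)
  also have "(\<Sum>k<n. \<Sum>l<n. stat l * Z0 $$ (l,k)) = (\<Sum>l<n. stat l * (\<Sum>k<n. Z0 $$ (l,k)))"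
    unfolding sum_distrib_left by (rule sum.swap)
  finally show ?thesis by (simp add: fundamental_mat_row_sum stationary_sum)
qed

lemma energy_le:
  assumes cp: "char_poly (P 0) = (\<Prod>l\<leftarrow>ls. [:- l, 1:])" and l0: "ls ! 0 = 1"
  shows "energy \<le> (1 / d i + 1 / d j) * (\<Sum>l\<in>{1..<n}. 1 / (1 - ls ! l)^2)"
proof -
  interpret irreducible_chain n "P 0" A stat by (rule P_irreducible_chain) auto
  define R where "R k l = Z0 $$ (k,l) / d l - 1 / (\<Sum>m<n. d m)" for k l
  have "energy = (\<Sum>k<n. d k * (R k i - R k j)^2)"
    unfolding energy_def potential_def R_def by simp
  also have "\<dots> \<le> (\<Sum>k<n. d k * ((d i * (R k i)^2 + d j * (R k j)^2) * (1 / d i + 1 / d j)))"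
    using d_pos ij by (intro sum_mono mult_left_mono square_diff_le_weighted) auto
  also have "\<dots> = (1 / d i + 1 / d j) * (\<Sum>k<n. d k * (d i * (R k i)^2 + d j * (R k j)^2))"
    by (simp add: sum_distrib_left mult_ac)
  also have "\<dots> \<le> (1 / d i + 1 / d j) * (\<Sum>k<n. d k * (\<Sum>l<n. d l * (R k l)^2))"
    using d_pos ij by (intro mult_left_mono sum_mono add_le_sum_lessThan) (auto intro!: add_nonneg_nonneg)
  also have "\<dots> = (1 / d i + 1 / d j) * ((\<Sum>k<n. \<Sum>l<n. Z0 $$ (k,l) * Z0 $$ (l,k)) - 1)"
    using weighted_square_sum_eq_trace by (simp add: R_def sum_distrib_left mult_ac)
  also have "\<dots> = (1 / d i + 1 / d j) * (\<Sum>l\<in>{1..<n}. 1 / (1 - ls ! l)^2)"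
    using trace_fundamental_square[OF cp l0] ij by simp
  finally show ?thesis .
qed

end

theorem theorem8:
  fixes n i j :: nat and A :: "real mat"
    and d :: "nat \<Rightarrow> real" and v :: "nat \<Rightarrow> real"
    and At P :: "real \<Rightarrow> real mat" and f :: "real \<Rightarrow> real"
  assumes A_carrier: "A \<in> carrier_mat n n"
    and A_sym: "\<forall>k<n. \<forall>l<n. A $$ (k,l) = A $$ (l,k)"
    and A_nonneg: "\<forall>k<n. \<forall>l<n. A $$ (k,l) \<ge> 0"
    and d_def: "d = (\<lambda>k. \<Sum>l<n. A $$ (k,l))"
    and d_pos: "\<forall>k<n. d k > 0"
    and conn: "connected_wgraph n A"
    and ij: "i < n" "j < n" "i \<noteq> j"
    and edge: "A $$ (i,j) > 0"
    and not_cut: "\<not> is_cut_edge n A i j"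
    and v_def: "v = (\<lambda>k. if k = i then 1 else if k = j then -1 else 0)"
    and At_def: "At = (\<lambda>t. mat n n (\<lambda>(k,l). A $$ (k,l) + t * A $$ (i,j) * v k * v l))"
    and P_def: "P = (\<lambda>t. mat n n (\<lambda>(k,l). At t $$ (k,l) / d k))"
    and f_def: "f = (\<lambda>t. kemeny (P t))"
  shows "\<exists>D. (f has_real_derivative D) (at 0 within {0..1}) \<and> 0 \<le> D \<and>
           (\<forall>ls :: real list. length ls = n \<and> ls ! 0 = 1 \<and>
              char_poly (P 0) = (\<Prod>l\<leftarrow>ls. [:- l, 1:]) \<longrightarrow>
              D \<le> A $$ (i,j) * (1 / d i + 1 / d j) * (\<Sum>l\<in>{1..<n}. 1 / (1 - ls ! l)^2))"
proof -
  interpret edge_softening n i j A d v At P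
    using A_sym A_nonneg d_def d_pos conn ij edge v_def At_def P_def by unfold_locales
  show ?thesis
  proof (intro exI conjI allI impI)
    show "(f has_real_derivative A $$ (i,j) * energy) (at 0 within {0..1})"
      unfolding f_def by (rule kemeny_P_has_derivative)
    show "0 \<le> A $$ (i,j) * energy" using edge energy_nonneg by simp
    fix ls :: "real list"
    assume "length ls = n \<and> ls ! 0 = 1 \<and> char_poly (P 0) = (\<Prod>l\<leftarrow>ls. [:- l, 1:])"
    then show "A $$ (i,j) * energy \<le> A $$ (i,j) * (1 / d i + 1 / d j) * (\<Sum>l\<in>{1..<n}. 1 / (1 - ls ! l)^2)"
      using energy_le edge by (simp add: mult.assoc)
  qed
qed

end
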